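(* Fix $R>0$ and $\delta\in(0,1)$. With probability at least $1-\delta$ over the random initialization $(\mathbf W(0),\mathbf a)$, simultaneously for every $B>0$, the class $$\mathcal F^{\mathbf W(0),\mathbf a}_{R,B}=\{f_{\mathbf W,\mathbf a}:\ \|\mathbf w_r-\mathbf w_r(0)\|_2\le R\ \forall r\in[m],\ \|\mathbf W-\mathbf W(0)\|_F\le B\}$$ satisfies $$\mathcal R_S\big(\mathcal F^{\mathbf W(0),\mathbf a}_{R,B}\big)\le\frac{B}{\sqrt{2n}}\left(1+\left(\frac{2\log\frac2\delta}{m}\right)^{1/4}\right)+\frac{2R^2\sqrt m}{\kappa}+R\sqrt{2\log\frac2\delta}.$$
   Context: $S=\{\mathbf x_1,\dots,\mathbf x_n\}\subset\mathbb R^d$ with $\|\mathbf x_i\|_2=1$ (fixed). Network $f_{\mathbf W,\mathbf a}(\mathbf x)=\frac1{\sqrt m}\sum_{r=1}^m a_r\max\{\mathbf w_r^\top\mathbf x,0\}$, $\mathbf W=(\mathbf w_1,\dots,\mathbf w_m)\in\mathbb R^{d\times m}$. Initialization independently $\mathbf w_r(0)\sim\mathcal N(\mathbf 0,\kappa^2\mathbf I)$, $a_r\sim\mathrm{unif}\{-1,1\}$, $\kappa>0$; $\mathbf a$ is held fixed in the class. The empirical Rademacher complexity of a class $\mathcal F$ of functions $\mathbb R^d\to\mathbb R$ is $\mathcal R_S(\mathcal F)=\frac1n\mathbb E_{\boldsymbol\varepsilon}\big[\sup_{f\in\mathcal F}\sum_{i=1}^n\varepsilon_if(\mathbf x_i)\big]$,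 with $\varepsilon_i$ i.i.d. uniform on $\{\pm1\}$. *)

theory Defs
  imports "HOL-Probability.Probability"
begin

definition relu_net :: "nat \<Rightarrow> (nat \<Rightarrow> real^'d) \<Rightarrow> (nat \<Rightarrow> real) \<Rightarrow> real^'d \<Rightarrow> real" where
  "relu_net m W a x = (1 / sqrt (real m)) * (\<Sum>r<m. a r * max (W r \<bullet> x) 0)"

definition frob_dist :: "nat \<Rightarrow> (nat \<Rightarrow> real^'d) \<Rightarrow> (nat \<Rightarrow> real^'d) \<Rightarrow> real" where
  "frob_dist m W W0 = sqrt (\<Sum>r<m. (norm (W r - W0 r))\<^sup>2)"

definition net_class :: "nat \<Rightarrow> (nat \<Rightarrow> real^'d) \<Rightarrow> (nat \<Rightarrow> real) \<Rightarrow> real \<Rightarrow> real \<Rightarrow> (real^'d \<Rightarrow> real) set" where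
  "net_class m W0 a R B =
     {relu_net m W a | W. (\<forall>r<m. norm (W r - W0 r) \<le> R) \<and> frob_dist m W W0 \<le> B}"

definition rademacher :: "nat \<Rightarrow> (nat \<Rightarrow> 'a) \<Rightarrow> ('a \<Rightarrow> real) set \<Rightarrow> real" where
  "rademacher n x F =
     (1 / real n) * measure_pmf.expectation (pmf_of_set ({..<n} \<rightarrow>\<^sub>E {-1, 1::real}))
        (\<lambda>\<epsilon>. SUP f\<in>F. \<Sum>i<n. \<epsilon> i * f (x i))"

definition gauss_vec :: "real \<Rightarrow> (real^'d) measure" where
  "gauss_vec \<kappa> = density lborel
     (\<lambda>w. ennreal ((2 * pi * \<kappa>\<^sup>2) powr (- real CARD('d) / 2) * exp (- (norm w)\<^sup>2 / (2 * \<kappa>\<^sup>2))))"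

definition sign_measure :: "real measure" where
  "sign_measure = measure_pmf (pmf_of_set {-1, 1})"

definition init_measure :: "nat \<Rightarrow> real \<Rightarrow> ((nat \<Rightarrow> real^'d) \<times> (nat \<Rightarrow> real)) measure" where
  "init_measure m \<kappa> = pair_measure (PiM {..<m} (\<lambda>_. gauss_vec \<kappa>)) (PiM {..<m} (\<lambda>_. sign_measure))"

end

(*
  Linearise every hidden unit at its initial weight: f_W = f_{W(0)} + (a linear function of W - W(0))
  + (an error that is non-zero only for units with |w_r(0)'x_i| <= R, where it is at most 2R).
  The Rademacher average of f_{W(0)} vanishes; by Cauchy-Schwarz and Jensen the linear part
  contributes at most B/(n sqrt m) times the square root of the number of active pairs
  (w_r(0)'x_i > 0), and the error at most 2R/(n sqrt m) times the number of pairs with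
  |w_r(0)'x_i| <= R.  Since w_r(0)'x_i ~ N(0, kappa^2), a pair is active with probability 1/2
  and lies in the slab with probability at most R/kappa; Hoeffding's inequality over the m
  independent units bounds both counts, each with failure probability delta/2.
*)

theory Submission
  imports Defs
begin

section \<open>Sums over sign vectors\<close>

abbreviation sign_vectors :: "nat \<Rightarrow> (nat \<Rightarrow> real) set" where
  "sign_vectors n \<equiv> {..<n} \<rightarrow>\<^sub>E {-1, 1}"

lemma finite_sign_vectors: "finite (sign_vectors n)"
  by (intro finite_PiE) auto

lemma sign_vectors_nonempty: "sign_vectors n \<noteq> {}"
  by (simp add: PiE_eq_empty_iff)

lemma sign_vectors_cases: "e \<in> sign_vectors n \<Longrightarrow> i < n \<Longrightarrow> e i = -1 \<or> e i = 1"
  using PiE_mem[of e "{..<n}" "\<lambda>_. {-1, 1}" i] by simp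

lemma sign_vectors_abs_eq_1:
  assumes "e \<in> sign_vectors n" "i < n"
  shows "\<bar>e i\<bar> = 1"
  using sign_vectors_cases[OF assms] by (elim disjE) simp_all

lemma flip_sign_in_sign_vectors:
  assumes "e \<in> sign_vectors n" "i < n"
  shows "e(i := - e i) \<in> sign_vectors n"
proof -
  have "- e i \<in> {-1, 1}"
    using sign_vectors_cases[OF assms] by (elim disjE) simp_all
  from PiE_fun_upd[where x = i, OF this assms(1)] show ?thesis
    using assms(2) by (simp add: insert_absorb)
qed

lemma sum_sign_vectors_eq_0_if_odd:
  fixes g :: "(nat \<Rightarrow> real) \<Rightarrow> real"
  assumes "i < n" and odd: "\<And>e. e \<in> sign_vectors n \<Longrightarrow> g (e(i := - e i)) = - g e"
  shows "(\<Sum>e\<in>sign_vectors n. g e) = 0"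
proof -
  let ?flip = "\<lambda>e::nat\<Rightarrow>real. e(i := - e i)"
  have bij: "bij_betw ?flip (sign_vectors n) (sign_vectors n)"
    by (rule bij_betw_byWitness[where f' = ?flip])
      (simp_all add: image_subset_iff flip_sign_in_sign_vectors[OF _ \<open>i < n\<close>])
  have "(\<Sum>e\<in>sign_vectors n. g e) = (\<Sum>e\<in>sign_vectors n. g (?flip e))"
    using sum.reindex_bij_betw[OF bij, of g] by simp
  also have "\<dots> = - (\<Sum>e\<in>sign_vectors n. g e)"
    using odd by (simp add: sum_negf)
  finally show ?thesis by simp
qed

lemma sum_sign_vectors_linear_eq_0:
  fixes c :: "nat \<Rightarrow> real"
  shows "(\<Sum>e\<in>sign_vectors n. \<Sum>i<n. e i * c i) = 0"
proof -
  have "(\<Sum>e\<in>sign_vectors n. e i * c i) = 0" if "i < n" for i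
    by (rule sum_sign_vectors_eq_0_if_odd[OF that]) simp
  then show ?thesis
    by (subst sum.swap) simp
qed

lemma sum_sign_vectors_norm_sq:
  fixes y :: "nat \<Rightarrow> 'a::real_inner"
  shows "(\<Sum>e\<in>sign_vectors n. (norm (\<Sum>i<n. e i *\<^sub>R y i))\<^sup>2)
       = real (card (sign_vectors n)) * (\<Sum>i<n. (norm (y i))\<^sup>2)"
proof -
  let ?P = "sign_vectors n"
  have cross: "(\<Sum>e\<in>?P. (e i * e j) * (y j \<bullet> y i)) = (if i = j then card ?P * (y i \<bullet> y i) else 0)"
    if "i < n" "j < n" for i j
  proof (cases "i = j")
    case True
    have "e i * e i = 1" if "e \<in> ?P" for e
      using sign_vectors_abs_eq_1[OF that \<open>i < n\<close>] by (metis abs_mult_self_eq mult_1)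
    then show ?thesis using True by simp
  next
    case False
    then show ?thesis
      by (simp, intro sum_sign_vectors_eq_0_if_odd[OF \<open>j < n\<close>]) simp
  qed
  have "(\<Sum>e\<in>?P. (norm (\<Sum>i<n. e i *\<^sub>R y i))\<^sup>2)
      = (\<Sum>e\<in>?P. \<Sum>i<n. \<Sum>j<n. (e i * e j) * (y j \<bullet> y i))"
    by (simp add: power2_norm_eq_inner inner_sum_left inner_sum_right sum_distrib_left mult_ac)
  also have "\<dots> = (\<Sum>i<n. \<Sum>j<n. \<Sum>e\<in>?P. (e i * e j) * (y j \<bullet> y i))"
    by (subst sum.swap) (rule sum.cong[OF refl], rule sum.swap)
  also have "\<dots> = (\<Sum>i<n. card ?P * (y i \<bullet> y i))"
    by (intro sum.cong refl) (simp add: cross)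
  finally show ?thesis
    by (simp add: power2_norm_eq_inner sum_distrib_left)
qed

lemma rademacher_eq_average:
  "rademacher n x F =
     (\<Sum>e\<in>sign_vectors n. SUP f\<in>F. \<Sum>i<n. e i * f (x i)) / (real n * card (sign_vectors n))"
  unfolding rademacher_def
  by (simp add: integral_pmf_of_set[OF sign_vectors_nonempty finite_sign_vectors])

lemma sum_sqrt_le_sqrt_card_mult_sum:
  fixes Q :: "'a \<Rightarrow> real"
  assumes "finite P" and "\<And>p. p \<in> P \<Longrightarrow> Q p \<ge> 0"
  shows "(\<Sum>p\<in>P. sqrt (Q p)) \<le> sqrt (card P * (\<Sum>p\<in>P. Q p))"
proof -
  have "(\<Sum>p\<in>P. sqrt (Q p)) = (\<Sum>p\<in>P. \<bar>1\<bar> * \<bar>sqrt (Q p)\<bar>)"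
    using assms(2) by (intro sum.cong) auto
  also have "\<dots> \<le> L2_set (\<lambda>_. 1) P * L2_set (\<lambda>p. sqrt (Q p)) P"
    by (rule L2_set_mult_ineq)
  also have "\<dots> = sqrt (card P * (\<Sum>p\<in>P. Q p))"
    using assms by (simp add: L2_set_def real_sqrt_mult)
  finally show ?thesis .
qed

section \<open>Linearisation around the initial weights\<close>

lemma relu_linearization_error:
  fixes u v R :: real
  assumes "\<bar>v - u\<bar> \<le> R"
  shows "\<bar>max v 0 - of_bool (u > 0) * v\<bar> \<le> 2 * R * of_bool (\<bar>u\<bar> \<le> R)"
proof (cases "\<bar>u\<bar> \<le> R")
  case True
  then have "\<bar>v\<bar> \<le> 2 * R" using assms by linarith
  moreover have "\<bar>max v 0 - of_bool (u > 0) * v\<bar> \<le> \<bar>v\<bar>" by (auto simp: max_def)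
  ultimately show ?thesis using True by simp
next
  case False
  show ?thesis
  proof (cases "u > 0")
    case True
    then have "v > 0" using False assms by linarith
    then show ?thesis using True False by simp
  next
    case not_pos: False
    then have "v < 0" using False assms by linarith
    then show ?thesis using not_pos False by simp
  qed
qed

lemma sum_inner_le_frob_dist:
  "(\<Sum>r<m. (W r - W0 r) \<bullet> V r) \<le> frob_dist m W W0 * sqrt (\<Sum>r<m. (norm (V r))\<^sup>2)"
proof -
  have "(\<Sum>r<m. (W r - W0 r) \<bullet> V r) \<le> (\<Sum>r<m. \<bar>norm (W r - W0 r)\<bar> * \<bar>norm (V r)\<bar>)"
    by (intro sum_mono) (simp add: norm_cauchy_schwarz)
  also have "\<dots> \<le> L2_set (\<lambda>r. norm (W r - W0 r)) {..<m} * L2_set (\<lambda>r. norm (V r)) {..<m}"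
    by (rule L2_set_mult_ineq)
  finally show ?thesis
    by (simp add: L2_set_def frob_dist_def)
qed

lemma relu_net_correlation_decomposition:
  "(\<Sum>i<n. e i * relu_net m W a (x i)) = (\<Sum>i<n. e i * relu_net m W0 a (x i))
     + (1 / sqrt m) * (\<Sum>r<m. (W r - W0 r) \<bullet> (\<Sum>i<n. e i *\<^sub>R (a r * of_bool (W0 r \<bullet> x i > 0)) *\<^sub>R x i))
     + (1 / sqrt m) * (\<Sum>i<n. \<Sum>r<m. e i * a r *
         (max (W r \<bullet> x i) 0 - of_bool (W0 r \<bullet> x i > 0) * (W r \<bullet> x i)))"
proof -
  define s where "s r i = (of_bool (W0 r \<bullet> x i > 0) :: real)" for r i
  define err where "err r i = max (W r \<bullet> x i) 0 - s r i * (W r \<bullet> x i)" for r i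
  have net_corr: "(\<Sum>i<n. e i * relu_net m G a (x i))
      = (1 / sqrt m) * (\<Sum>i<n. \<Sum>r<m. e i * a r * max (G r \<bullet> x i) 0)" for G
    by (simp add: relu_net_def sum_distrib_left mult_ac)
  have "e i * a r * max (W r \<bullet> x i) 0 = e i * a r * max (W0 r \<bullet> x i) 0
      + e i * a r * s r i * ((W r - W0 r) \<bullet> x i) + e i * a r * err r i" for r i
    by (simp add: err_def s_def inner_diff_left algebra_simps)
  then have "(\<Sum>i<n. \<Sum>r<m. e i * a r * max (W r \<bullet> x i) 0)
      = (\<Sum>i<n. \<Sum>r<m. e i * a r * max (W0 r \<bullet> x i) 0)
      + (\<Sum>i<n. \<Sum>r<m. e i * a r * s r i * ((W r - W0 r) \<bullet> x i))
      + (\<Sum>i<n. \<Sum>r<m. e i * a r * err r i)"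
    by (simp only: sum.distrib)
  also have "(\<Sum>i<n. \<Sum>r<m. e i * a r * s r i * ((W r - W0 r) \<bullet> x i))
      = (\<Sum>r<m. (W r - W0 r) \<bullet> (\<Sum>i<n. e i *\<^sub>R (a r * s r i) *\<^sub>R x i))"
    by (subst sum.swap) (simp add: inner_sum_right mult.assoc)
  finally show ?thesis
    unfolding net_corr s_def err_def by (simp only: distrib_left[symmetric])
qed

lemma sum_relu_linearization_error_le:
  fixes x W W0 :: "nat \<Rightarrow> real^'d"
  assumes "\<And>i. i < n \<Longrightarrow> norm (x i) = 1" and "\<And>r. r < m \<Longrightarrow> norm (W r - W0 r) \<le> R"
    and "\<And>r. r < m \<Longrightarrow> \<bar>a r\<bar> \<le> 1" and "\<And>i. i < n \<Longrightarrow> \<bar>e i\<bar> \<le> 1"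
  shows "(\<Sum>i<n. \<Sum>r<m. e i * a r * (max (W r \<bullet> x i) 0 - of_bool (W0 r \<bullet> x i > 0) * (W r \<bullet> x i)))
       \<le> 2 * R * (\<Sum>r<m. \<Sum>i<n. of_bool (\<bar>W0 r \<bullet> x i\<bar> \<le> R))"
proof -
  let ?err = "\<lambda>r i. max (W r \<bullet> x i) 0 - of_bool (W0 r \<bullet> x i > 0) * (W r \<bullet> x i)"
  have "\<bar>e i * a r * ?err r i\<bar> \<le> 2 * R * of_bool (\<bar>W0 r \<bullet> x i\<bar> \<le> R)" if "i < n" "r < m" for i r
  proof -
    have "\<bar>W r \<bullet> x i - W0 r \<bullet> x i\<bar> = \<bar>(W r - W0 r) \<bullet> x i\<bar>"
      by (simp add: inner_diff_left)
    also have "\<dots> \<le> norm (W r - W0 r) * norm (x i)"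
      by (rule Cauchy_Schwarz_ineq2)
    also have "\<dots> \<le> R"
      using assms(1,2) that by simp
    finally have "\<bar>?err r i\<bar> \<le> 2 * R * of_bool (\<bar>W0 r \<bullet> x i\<bar> \<le> R)"
      by (rule relu_linearization_error)
    then have "\<bar>e i\<bar> * \<bar>a r\<bar> * \<bar>?err r i\<bar> \<le> 1 * 1 * (2 * R * of_bool (\<bar>W0 r \<bullet> x i\<bar> \<le> R))"
      using assms(3,4) that by (intro mult_mono) auto
    then show ?thesis
      by (simp add: abs_mult)
  qed
  then have "(\<Sum>i<n. \<Sum>r<m. e i * a r * ?err r i) \<le> (\<Sum>i<n. \<Sum>r<m. 2 * R * of_bool (\<bar>W0 r \<bullet> x i\<bar> \<le> R))"
    by (intro sum_mono) (simp add: abs_le_iff)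
  also have "\<dots> = 2 * R * (\<Sum>r<m. \<Sum>i<n. of_bool (\<bar>W0 r \<bullet> x i\<bar> \<le> R))"
    by (subst sum.swap) (simp only: sum_distrib_left)
  finally show ?thesis .
qed

lemma net_class_correlation_le:
  fixes x W0 :: "nat \<Rightarrow> real^'d" and a e :: "nat \<Rightarrow> real"
  assumes xn: "\<And>i. i < n \<Longrightarrow> norm (x i) = 1"
    and a: "\<And>r. r < m \<Longrightarrow> \<bar>a r\<bar> \<le> 1" and e: "\<And>i. i < n \<Longrightarrow> \<bar>e i\<bar> \<le> 1"
    and f: "f \<in> net_class m W0 a R B"
  shows "(\<Sum>i<n. e i * f (x i)) \<le> (\<Sum>i<n. e i * relu_net m W0 a (x i))
     + B / sqrt m * sqrt (\<Sum>r<m. (norm (\<Sum>i<n. e i *\<^sub>R (a r * of_bool (W0 r \<bullet> x i > 0)) *\<^sub>R x i))\<^sup>2)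
     + 2 * R / sqrt m * (\<Sum>r<m. \<Sum>i<n. of_bool (\<bar>W0 r \<bullet> x i\<bar> \<le> R))"
proof -
  obtain W where f_def: "f = relu_net m W a" and W_near: "\<And>r. r < m \<Longrightarrow> norm (W r - W0 r) \<le> R"
    and W_frob: "frob_dist m W W0 \<le> B"
    using f unfolding net_class_def by auto
  define V where "V r = (\<Sum>i<n. e i *\<^sub>R (a r * of_bool (W0 r \<bullet> x i > 0)) *\<^sub>R x i)" for r
  define Q where "Q = (\<Sum>r<m. (norm (V r))\<^sup>2)"
  have "(\<Sum>r<m. (W r - W0 r) \<bullet> V r) \<le> frob_dist m W W0 * sqrt Q"
    unfolding Q_def by (rule sum_inner_le_frob_dist)
  also have "\<dots> \<le> B * sqrt Q"
    using W_frob by (rule mult_right_mono) (simp add: Q_def sum_nonneg)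
  finally have "(1 / sqrt m) * (\<Sum>r<m. (W r - W0 r) \<bullet> V r) \<le> (1 / sqrt m) * (B * sqrt Q)"
    by (rule mult_left_mono) simp
  moreover have "(\<Sum>i<n. \<Sum>r<m. e i * a r *
         (max (W r \<bullet> x i) 0 - of_bool (W0 r \<bullet> x i > 0) * (W r \<bullet> x i)))
      \<le> 2 * R * (\<Sum>r<m. \<Sum>i<n. of_bool (\<bar>W0 r \<bullet> x i\<bar> \<le> R))"
    by (rule sum_relu_linearization_error_le[OF xn W_near a e])
  then have "(1 / sqrt m) * (\<Sum>i<n. \<Sum>r<m. e i * a r *
         (max (W r \<bullet> x i) 0 - of_bool (W0 r \<bullet> x i > 0) * (W r \<bullet> x i)))
      \<le> (1 / sqrt m) * (2 * R * (\<Sum>r<m. \<Sum>i<n. of_bool (\<bar>W0 r \<bullet> x i\<bar> \<le> R)))"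
    by (rule mult_left_mono) simp
  ultimately show ?thesis
    unfolding f_def relu_net_correlation_decomposition[of e m W a x n W0] Q_def V_def
    by (simp add: divide_inverse mult_ac)
qed

lemma sum_sign_vectors_sqrt_le:
  fixes x W0 :: "nat \<Rightarrow> real^'d" and a :: "nat \<Rightarrow> real"
  assumes xn: "\<And>i. i < n \<Longrightarrow> norm (x i) = 1" and a: "\<And>r. r < m \<Longrightarrow> \<bar>a r\<bar> \<le> 1"
  shows "(\<Sum>e\<in>sign_vectors n. sqrt (\<Sum>r<m. (norm (\<Sum>i<n. e i *\<^sub>R (a r * of_bool (W0 r \<bullet> x i > 0)) *\<^sub>R x i))\<^sup>2))
       \<le> card (sign_vectors n) * sqrt (\<Sum>r<m. \<Sum>i<n. of_bool (W0 r \<bullet> x i > 0))"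
proof -
  let ?P = "sign_vectors n"
  define s where "s r i = (of_bool (W0 r \<bullet> x i > 0) :: real)" for r i
  define Q where "Q e = (\<Sum>r<m. (norm (\<Sum>i<n. e i *\<^sub>R (a r * s r i) *\<^sub>R x i))\<^sup>2)" for e :: "nat \<Rightarrow> real"
  define S where "S = (\<Sum>r<m. \<Sum>i<n. s r i)"
  define c where "c = real (card ?P)"
  have "c > 0"
    unfolding c_def using finite_sign_vectors sign_vectors_nonempty by (simp add: card_gt_0_iff)
  have "(\<Sum>e\<in>?P. Q e) = (\<Sum>r<m. c * (\<Sum>i<n. (norm ((a r * s r i) *\<^sub>R x i))\<^sup>2))"
    unfolding Q_def c_def by (subst sum.swap) (rule sum.cong[OF refl sum_sign_vectors_norm_sq])
  also have "\<dots> \<le> (\<Sum>r<m. c * (\<Sum>i<n. s r i))"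
  proof (intro sum_mono mult_left_mono)
    fix r i assume "r \<in> {..<m}" "i \<in> {..<n}"
    then have "(a r)\<^sup>2 \<le> 1" and "norm (x i) = 1"
      using a xn by (simp_all add: abs_square_le_1)
    moreover have "(s r i)\<^sup>2 = s r i" "s r i \<ge> 0"
      by (simp_all add: s_def)
    ultimately show "(norm ((a r * s r i) *\<^sub>R x i))\<^sup>2 \<le> s r i"
      by (simp add: power_mult_distrib mult_left_le_one_le)
  qed (use \<open>c > 0\<close> in simp)
  also have "\<dots> = c * S"
    by (simp add: S_def sum_distrib_left)
  finally have sum_Q: "(\<Sum>e\<in>?P. Q e) \<le> c * S" .
  have "(\<Sum>e\<in>?P. sqrt (Q e)) \<le> sqrt (c * (\<Sum>e\<in>?P. Q e))"
    unfolding c_def Q_def by (rule sum_sqrt_le_sqrt_card_mult_sum[OF finite_sign_vectors]) (simp add: sum_nonneg)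
  also have "\<dots> \<le> sqrt (c * (c * S))"
    using sum_Q \<open>c > 0\<close> by (simp add: mult_left_mono)
  also have "\<dots> = c * sqrt S"
    using \<open>c > 0\<close> by (simp add: real_sqrt_mult)
  finally show ?thesis
    unfolding Q_def S_def s_def c_def .
qed

lemma rademacher_net_class_le:
  fixes x W0 :: "nat \<Rightarrow> real^'d" and a :: "nat \<Rightarrow> real"
  assumes n: "n > 0" and xn: "\<And>i. i < n \<Longrightarrow> norm (x i) = 1"
    and a: "\<And>r. r < m \<Longrightarrow> \<bar>a r\<bar> \<le> 1" and "R \<ge> 0" "B \<ge> 0"
  shows "rademacher n x (net_class m W0 a R B) \<le>
     B / (n * sqrt m) * sqrt (\<Sum>r<m. \<Sum>i<n. of_bool (W0 r \<bullet> x i > 0))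
   + 2 * R / (n * sqrt m) * (\<Sum>r<m. \<Sum>i<n. of_bool (\<bar>W0 r \<bullet> x i\<bar> \<le> R))"
proof -
  let ?P = "sign_vectors n" and ?f0 = "relu_net m W0 a"
  define F where "F = net_class m W0 a R B"
  define Q where "Q e = (\<Sum>r<m. (norm (\<Sum>i<n. e i *\<^sub>R (a r * of_bool (W0 r \<bullet> x i > 0)) *\<^sub>R x i))\<^sup>2)"
    for e :: "nat \<Rightarrow> real"
  define S1 where "S1 = (\<Sum>r<m. \<Sum>i<n. of_bool (W0 r \<bullet> x i > 0) :: real)"
  define S2 where "S2 = (\<Sum>r<m. \<Sum>i<n. of_bool (\<bar>W0 r \<bullet> x i\<bar> \<le> R) :: real)"
  define c where "c = real (card ?P)"
  have "c > 0"
    unfolding c_def using finite_sign_vectors sign_vectors_nonempty by (simp add: card_gt_0_iff)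
  have "?f0 \<in> F"
    unfolding F_def net_class_def frob_dist_def using assms by auto
  then have sup_le: "(SUP f\<in>F. \<Sum>i<n. e i * f (x i))
      \<le> (\<Sum>i<n. e i * ?f0 (x i)) + B / sqrt m * sqrt (Q e) + 2 * R / sqrt m * S2"
    if "e \<in> ?P" for e
  proof (intro cSUP_least)
    fix f assume "f \<in> F"
    moreover have "\<bar>e i\<bar> \<le> 1" if "i < n" for i
      using sign_vectors_abs_eq_1[OF \<open>e \<in> ?P\<close> that] by simp
    ultimately show "(\<Sum>i<n. e i * f (x i))
        \<le> (\<Sum>i<n. e i * ?f0 (x i)) + B / sqrt m * sqrt (Q e) + 2 * R / sqrt m * S2"
      unfolding F_def Q_def S2_def by (intro net_class_correlation_le[OF xn a])
  qed blast
  have "(\<Sum>e\<in>?P. SUP f\<in>F. \<Sum>i<n. e i * f (x i))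
      \<le> (\<Sum>e\<in>?P. (\<Sum>i<n. e i * ?f0 (x i)) + B / sqrt m * sqrt (Q e) + 2 * R / sqrt m * S2)"
    by (rule sum_mono) (rule sup_le)
  also have "\<dots> = B / sqrt m * (\<Sum>e\<in>?P. sqrt (Q e)) + c * (2 * R / sqrt m * S2)"
    by (simp add: sum.distrib sum_distrib_left sum_sign_vectors_linear_eq_0 c_def)
  also have "\<dots> \<le> B / sqrt m * (c * sqrt S1) + c * (2 * R / sqrt m * S2)"
  proof -
    have "(\<Sum>e\<in>?P. sqrt (Q e)) \<le> c * sqrt S1"
      unfolding Q_def S1_def c_def by (rule sum_sign_vectors_sqrt_le[OF xn a])
    then show ?thesis
      using \<open>B \<ge> 0\<close> by (intro add_mono order.refl mult_left_mono) simp_all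
  qed
  finally have "(\<Sum>e\<in>?P. SUP f\<in>F. \<Sum>i<n. e i * f (x i))
      \<le> (n * c) * (B / (n * sqrt m) * sqrt S1 + 2 * R / (n * sqrt m) * S2)"
    using n by (simp add: field_simps)
  then show ?thesis
    unfolding rademacher_eq_average F_def[symmetric] c_def[symmetric] S1_def S2_def
    using n \<open>c > 0\<close> by (simp add: divide_le_eq mult.commute)
qed

section \<open>Gaussian initial weights\<close>

definition normal_measure :: "real \<Rightarrow> real measure" where
  "normal_measure \<sigma> = density lborel (\<lambda>t. ennreal (normal_density 0 \<sigma> t))"

lemma prob_space_normal_measure: "\<sigma> > 0 \<Longrightarrow> prob_space (normal_measure \<sigma>)"
  unfolding normal_measure_def by (rule prob_space_normal_density)

lemma sets_normal_measure [simp, measurable_cong]: "sets (normal_measure \<sigma>) = sets borel"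
  by (simp add: normal_measure_def)

lemma emeasure_normal_measure:
  "A \<in> sets borel \<Longrightarrow>
     emeasure (normal_measure \<sigma>) A = (\<integral>\<^sup>+t. ennreal (normal_density 0 \<sigma> t) * indicator A t \<partial>lborel)"
  by (simp add: normal_measure_def emeasure_density)

lemma measure_normal_measure_Icc_le:
  assumes "\<sigma> > 0" and "R \<ge> 0"
  shows "measure (normal_measure \<sigma>) {-R..R} \<le> R / \<sigma>"
proof -
  interpret prob_space "normal_measure \<sigma>"
    using assms(1) by (rule prob_space_normal_measure)
  define c where "c = 1 / sqrt (2 * pi * \<sigma>\<^sup>2)"
  have density_le: "normal_density 0 \<sigma> t \<le> c" for t
    unfolding normal_density_def c_def by (rule mult_left_le) simp_all
  have "emeasure (normal_measure \<sigma>) {-R..R}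
      = (\<integral>\<^sup>+t. ennreal (normal_density 0 \<sigma> t) * indicator {-R..R} t \<partial>lborel)"
    by (rule emeasure_normal_measure) simp
  also have "\<dots> \<le> (\<integral>\<^sup>+t. ennreal c * indicator {-R..R} t \<partial>lborel)"
    using density_le by (intro nn_integral_mono) (auto simp: indicator_def intro: ennreal_leI)
  also have "\<dots> = ennreal c * emeasure lborel {-R..R}"
    by (rule nn_integral_cmult_indicator) simp
  also have "\<dots> = ennreal c * ennreal (2 * R)"
    using assms(2) by (simp add: emeasure_lborel_Icc_eq)
  also have "\<dots> = ennreal (c * (2 * R))"
    by (rule ennreal_mult[symmetric]) (simp_all add: c_def assms(2))
  finally have "measure (normal_measure \<sigma>) {-R..R} \<le> c * (2 * R)"
    using assms(2) by (simp add: emeasure_eq_measure ennreal_le_iff c_def)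
  also have "\<dots> \<le> R / \<sigma>"
  proof -
    have "2 \<le> sqrt (2 * pi)"
      using pi_gt3 by (simp add: real_le_rsqrt)
    moreover have "sqrt (2 * pi * \<sigma>\<^sup>2) = \<sigma> * sqrt (2 * pi)"
      using assms(1) by (simp add: real_sqrt_mult mult.commute)
    ultimately show ?thesis
      using assms by (simp add: c_def field_simps mult_left_mono)
  qed
  finally show ?thesis .
qed

lemma measure_normal_measure_pos_le:
  assumes "\<sigma> > 0"
  shows "measure (normal_measure \<sigma>) {0<..} \<le> 1 / 2"
proof -
  interpret prob_space "normal_measure \<sigma>"
    using assms by (rule prob_space_normal_measure)
  have "distributed (normal_measure \<sigma>) lborel (\<lambda>t. t) (\<lambda>t. ennreal (normal_density 0 \<sigma> t))"
    unfolding distributed_def by (simp add: distr_id2 normal_measure_def)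
  from normal_density_affine[OF this assms, of "-1" 0]
  have "distributed (normal_measure \<sigma>) lborel uminus (\<lambda>t. ennreal (normal_density 0 \<sigma> t))"
    by simp
  from distributed_emeasure[OF this, of "{0<..}"]
  have "emeasure (normal_measure \<sigma>) {..<0} = emeasure (normal_measure \<sigma>) {0<..}"
    by (simp add: emeasure_normal_measure vimage_def lessThan_def)
  then have "prob {..<0} = prob {0<..}"
    by (simp add: measure_def)
  moreover have "prob {..<0} + prob {0<..} = prob ({..<0} \<union> {0<..})"
    by (rule finite_measure_Union[symmetric]) auto
  moreover have "prob ({..<0} \<union> {0<..}) \<le> 1"
    by (rule prob_le_1)
  ultimately show ?thesis
    by linarith
qed

lemma prod_indicator_PiE:
  fixes g :: "'i \<Rightarrow> 'a \<Rightarrow> ennreal"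
  assumes "finite I" and "f \<in> extensional I"
  shows "(\<Prod>i\<in>I. g i (f i) * indicator (A i) (f i)) = (\<Prod>i\<in>I. g i (f i)) * indicator (Pi\<^sub>E I A) f"
proof (cases "f \<in> Pi\<^sub>E I A")
  case True
  then show ?thesis
    by (auto simp: PiE_iff indicator_def intro!: prod.cong)
next
  case False
  then obtain i where "i \<in> I" "f i \<notin> A i"
    using assms(2) by (auto simp: PiE_iff)
  then have "(\<Prod>i\<in>I. g i (f i) * indicator (A i) (f i)) = 0"
    using assms(1) by (intro prod_zero) (auto intro!: bexI[of _ i])
  then show ?thesis
    using False by simp
qed

lemma PiM_normal_measure:
  fixes I :: "'i set"
  assumes "finite I" and "\<sigma> > 0"
  shows "PiM I (\<lambda>_. normal_measure \<sigma>) = density (PiM I (\<lambda>_. lborel)) (\<lambda>f. \<Prod>i\<in>I. ennreal (normal_density 0 \<sigma> (f i)))"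
proof -
  let ?p = "\<lambda>t. ennreal (normal_density 0 \<sigma> t)"
  interpret N: product_sigma_finite "\<lambda>_::'i. normal_measure \<sigma>"
    unfolding product_sigma_finite_def
    using prob_space_normal_measure[OF assms(2)] prob_space_imp_sigma_finite by blast
  interpret L: product_sigma_finite "\<lambda>_::'i. lborel :: real measure"
    unfolding product_sigma_finite_def by (simp add: lborel.sigma_finite_measure_axioms)
  show ?thesis
  proof (rule N.PiM_eqI[symmetric])
    show "sets (density (PiM I (\<lambda>_. lborel)) (\<lambda>f. \<Prod>i\<in>I. ?p (f i))) = sets (PiM I (\<lambda>_. normal_measure \<sigma>))"
      by (simp only: sets_density) (rule sets_PiM_cong, auto)
  next
    fix A assume A: "\<And>i. i \<in> I \<Longrightarrow> A i \<in> sets (normal_measure \<sigma>)"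
    have "Pi\<^sub>E I A \<in> sets (PiM I (\<lambda>_. lborel))"
      using A assms(1) by (intro sets_PiM_I_finite) auto
    then have "emeasure (density (PiM I (\<lambda>_. lborel)) (\<lambda>f. \<Prod>i\<in>I. ?p (f i))) (Pi\<^sub>E I A)
        = (\<integral>\<^sup>+f. (\<Prod>i\<in>I. ?p (f i)) * indicator (Pi\<^sub>E I A) f \<partial>PiM I (\<lambda>_. lborel))"
      by (subst emeasure_density) auto
    also have "\<dots> = (\<integral>\<^sup>+f. (\<Prod>i\<in>I. ?p (f i) * indicator (A i) (f i)) \<partial>PiM I (\<lambda>_. lborel))"
      by (intro nn_integral_cong prod_indicator_PiE[OF assms(1), symmetric]) (simp add: space_PiM PiE_iff)
    also have "\<dots> = (\<Prod>i\<in>I. \<integral>\<^sup>+t. ?p t * indicator (A i) t \<partial>lborel)"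
      using A by (intro L.product_nn_integral_prod assms(1)) auto
    also have "\<dots> = (\<Prod>i\<in>I. emeasure (normal_measure \<sigma>) (A i))"
      using A by (intro prod.cong refl) (simp add: normal_measure_def emeasure_density)
    finally show "emeasure (density (PiM I (\<lambda>_. lborel)) (\<lambda>f. \<Prod>i\<in>I. ?p (f i))) (Pi\<^sub>E I A)
        = (\<Prod>i\<in>I. emeasure (normal_measure \<sigma>) (A i))" .
  qed (rule assms(1))
qed

lemma gauss_vec_density_eq_prod:
  fixes f :: "real^'d \<Rightarrow> real"
  assumes "\<kappa> > 0"
  shows "(2 * pi * \<kappa>\<^sup>2) powr (- real CARD('d) / 2) * exp (- (norm (\<Sum>b\<in>Basis. f b *\<^sub>R b))\<^sup>2 / (2 * \<kappa>\<^sup>2))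
       = (\<Prod>b\<in>Basis. normal_density 0 \<kappa> (f b))"
proof -
  let ?B = "Basis :: (real^'d) set" and ?c = "2 * pi * \<kappa>\<^sup>2"
  have "(norm (\<Sum>b\<in>?B. f b *\<^sub>R b))\<^sup>2 = (\<Sum>b\<in>?B. (f b)\<^sup>2)"
  proof -
    let ?v = "\<Sum>b\<in>?B. f b *\<^sub>R b"
    have "(norm ?v)\<^sup>2 = (\<Sum>b\<in>Basis. (?v \<bullet> b) * (?v \<bullet> b))"
      by (simp add: power2_norm_eq_inner euclidean_inner[of ?v ?v])
    then show ?thesis
      by (simp add: power2_eq_square)
  qed
  moreover have "?c powr (- real CARD('d) / 2) = (1 / sqrt ?c) ^ CARD('d)"
  proof -
    have "?c powr (- real CARD('d) / 2) = 1 / (?c powr (1 / 2)) powr (real CARD('d))"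
      by (simp add: powr_powr powr_minus_divide)
    also have "\<dots> = 1 / (sqrt ?c) ^ CARD('d)"
      using assms by (simp add: powr_half_sqrt powr_realpow)
    finally show ?thesis
      by (simp add: power_one_over)
  qed
  moreover have "(\<Prod>b\<in>?B. normal_density 0 \<kappa> (f b))
      = (\<Prod>b\<in>?B. 1 / sqrt ?c * exp (- (f b)\<^sup>2 / (2 * \<kappa>\<^sup>2)))"
    by (simp add: normal_density_def)
  moreover have "\<dots> = (1 / sqrt ?c) ^ CARD('d) * (\<Prod>b\<in>?B. exp (- (f b)\<^sup>2 / (2 * \<kappa>\<^sup>2)))"
    by (subst prod.distrib) simp
  moreover have "(\<Prod>b\<in>?B. exp (- (f b)\<^sup>2 / (2 * \<kappa>\<^sup>2))) = exp (\<Sum>b\<in>?B. - (f b)\<^sup>2 / (2 * \<kappa>\<^sup>2))"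
    by (simp add: exp_sum)
  moreover have "(\<Sum>b\<in>?B. - (f b)\<^sup>2 / (2 * \<kappa>\<^sup>2)) = - (\<Sum>b\<in>?B. (f b)\<^sup>2) / (2 * \<kappa>\<^sup>2)"
    by (simp add: sum_divide_distrib sum_negf)
  ultimately show ?thesis
    by simp
qed

lemma sum_Basis_scaleR_measurable:
  "(\<lambda>f. \<Sum>b\<in>Basis. f b *\<^sub>R b) \<in> borel_measurable (PiM (Basis :: 'a::euclidean_space set) (\<lambda>_. normal_measure \<sigma>))"
proof -
  have "(\<lambda>f. \<Sum>b\<in>Basis. f b *\<^sub>R b) \<in> borel_measurable (PiM (Basis :: 'a set) (\<lambda>_. lborel))"
    by measurable
  then show ?thesis
    by (simp add: measurable_cong_sets[OF sets_PiM_cong[OF refl, of _ "\<lambda>_. normal_measure \<sigma>" "\<lambda>_. lborel"] refl])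
qed

lemma gauss_vec_eq_distr_PiM:
  assumes "\<kappa> > 0"
  shows "gauss_vec \<kappa> = distr (PiM (Basis :: (real^'d) set) (\<lambda>_. normal_measure \<kappa>)) borel (\<lambda>f. \<Sum>b\<in>Basis. f b *\<^sub>R b)"
proof (rule measure_eqI)
  let ?B = "Basis :: (real^'d) set"
  let ?N = "PiM ?B (\<lambda>_. normal_measure \<kappa>)" and ?L = "PiM ?B (\<lambda>_. lborel)"
  let ?T = "\<lambda>f. \<Sum>b\<in>?B. f b *\<^sub>R b"
  let ?g = "\<lambda>w::real^'d. (2 * pi * \<kappa>\<^sup>2) powr (- real CARD('d) / 2) * exp (- (norm w)\<^sup>2 / (2 * \<kappa>\<^sup>2))"
  let ?p = "\<lambda>f. \<Prod>b\<in>?B. ennreal (normal_density 0 \<kappa> (f b))"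
  show "sets (gauss_vec \<kappa>) = sets (distr ?N borel ?T)"
    by (simp add: gauss_vec_def)
  fix A assume "A \<in> sets (gauss_vec \<kappa> :: (real^'d) measure)"
  then have A[measurable]: "A \<in> sets borel"
    by (simp add: gauss_vec_def)
  have T_measurable[measurable]: "?T \<in> borel_measurable ?L"
    by measurable
  have "emeasure (gauss_vec \<kappa>) A = (\<integral>\<^sup>+w. ennreal (?g w) * indicator A w \<partial>lborel)"
    unfolding gauss_vec_def by (simp add: emeasure_density)
  also have "\<dots> = (\<integral>\<^sup>+f. ennreal (?g (?T f)) * indicator A (?T f) \<partial>?L)"
    by (subst lborel_eq[where 'a = "real^'d"]) (simp add: nn_integral_distr)
  also have "\<dots> = (\<integral>\<^sup>+f. ?p f * indicator (?T -` A \<inter> space ?L) f \<partial>?L)"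
  proof (intro nn_integral_cong)
    fix f :: "real^'d \<Rightarrow> real" assume "f \<in> space ?L"
    moreover have "ennreal (?g (?T f)) = ?p f"
      by (subst gauss_vec_density_eq_prod[OF assms]) (simp add: prod_ennreal)
    ultimately show "ennreal (?g (?T f)) * indicator A (?T f) = ?p f * indicator (?T -` A \<inter> space ?L) f"
      by (simp add: indicator_def)
  qed
  also have "\<dots> = emeasure ?N (?T -` A \<inter> space ?N)"
    unfolding PiM_normal_measure[OF finite_Basis assms]
    by (subst emeasure_density) (auto intro: measurable_sets[OF T_measurable] simp: mult.commute space_PiM)
  also have "\<dots> = emeasure (distr ?N borel ?T) A"
    using sum_Basis_scaleR_measurable by (simp add: emeasure_distr)
  finally show "emeasure (gauss_vec \<kappa>) A = emeasure (distr ?N borel ?T) A" .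
qed

lemma prob_space_gauss_vec: "\<kappa> > 0 \<Longrightarrow> prob_space (gauss_vec \<kappa> :: (real^'d) measure)"
  unfolding gauss_vec_eq_distr_PiM
  by (intro prob_space.prob_space_distr prob_space_PiM prob_space_normal_measure sum_Basis_scaleR_measurable)

lemma sets_gauss_vec [simp, measurable_cong]: "sets (gauss_vec \<kappa> :: (real^'d) measure) = sets borel"
  by (simp add: gauss_vec_def)

lemma indep_vars_PiM_components:
  assumes "prob_space M" and "I \<noteq> {}"
  shows "prob_space.indep_vars (PiM I (\<lambda>_. M)) (\<lambda>_. M) (\<lambda>i \<omega>. \<omega> i) I"
proof -
  let ?M = "PiM I (\<lambda>_. M)"
  interpret P: prob_space ?M
    by (intro prob_space_PiM assms(1))
  have "distr ?M ?M (\<lambda>\<omega>. \<lambda>i\<in>I. \<omega> i) = distr ?M ?M (\<lambda>\<omega>. \<omega>)"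
    by (rule distr_cong) (auto simp: space_PiM PiE_def extensional_def restrict_def fun_eq_iff)
  also have "\<dots> = PiM I (\<lambda>i. distr ?M M (\<lambda>\<omega>. \<omega> i))"
    by (simp, rule PiM_cong) (auto intro!: distr_PiM_component[symmetric] assms(1))
  finally show ?thesis
    using P.indep_vars_iff_distr_eq_PiM'[where I = I and M' = "\<lambda>_. M" and X = "\<lambda>i \<omega>. \<omega> i"] assms(2)
    by (simp add: measurable_component_singleton)
qed

lemma distributed_PiM_normal_component:
  assumes "\<sigma> > 0" and "i \<in> I"
  shows "distributed (PiM I (\<lambda>_. normal_measure \<sigma>)) lborel (\<lambda>\<omega>. \<omega> i) (\<lambda>t. ennreal (normal_density 0 \<sigma> t))"
  unfolding distributed_def
proof (intro conjI)
  let ?M = "PiM I (\<lambda>_. normal_measure \<sigma>)"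
  have "distr ?M lborel (\<lambda>\<omega>. \<omega> i) = distr ?M (normal_measure \<sigma>) (\<lambda>\<omega>. \<omega> i)"
    by (rule distr_cong) simp_all
  also have "\<dots> = normal_measure \<sigma>"
    using assms by (intro distr_PiM_component prob_space_normal_measure)
  finally show "distr ?M lborel (\<lambda>\<omega>. \<omega> i) = density lborel (\<lambda>t. ennreal (normal_density 0 \<sigma> t))"
    by (simp add: normal_measure_def)
  show "(\<lambda>\<omega>. \<omega> i) \<in> measurable ?M lborel"
    using measurable_component_singleton[OF assms(2), of "\<lambda>_. normal_measure \<sigma>"]
    by (simp add: measurable_cong_sets[OF refl, of "normal_measure \<sigma>" lborel ?M])
qed simp

lemma sum_nonzero_coords_sq:
  fixes x :: "'a::euclidean_space"
  shows "(\<Sum>b\<in>{b\<in>Basis. b \<bullet> x \<noteq> 0}. (b \<bullet> x)\<^sup>2) = (norm x)\<^sup>2"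
proof -
  have "(\<Sum>b\<in>{b\<in>Basis. b \<bullet> x \<noteq> 0}. (b \<bullet> x)\<^sup>2) = (\<Sum>b\<in>Basis. (b \<bullet> x)\<^sup>2)"
    by (rule sum.mono_neutral_left) auto
  also have "\<dots> = x \<bullet> x"
    by (simp add: euclidean_inner[of x x] power2_eq_square inner_commute)
  finally show ?thesis
    by (simp add: power2_norm_eq_inner)
qed

lemma nonzero_coords_nonempty:
  fixes x :: "'a::euclidean_space"
  assumes "x \<noteq> 0"
  shows "{b\<in>Basis. b \<bullet> x \<noteq> 0} \<noteq> {}"
proof
  assume "{b\<in>Basis. b \<bullet> x \<noteq> 0} = {}"
  then have "\<forall>b\<in>Basis. x \<bullet> b = 0"
    by (auto simp: inner_commute)
  with assms show False
    by (simp add: euclidean_all_zero_iff)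
qed

lemma inner_sum_Basis_nonzero_coords:
  fixes x :: "'a::euclidean_space"
  shows "(\<Sum>b\<in>Basis. f b *\<^sub>R b) \<bullet> x = (\<Sum>b\<in>{b\<in>Basis. b \<bullet> x \<noteq> 0}. (b \<bullet> x) * f b)"
proof -
  have "(\<Sum>b\<in>Basis. f b *\<^sub>R b) \<bullet> x = (\<Sum>b\<in>Basis. (b \<bullet> x) * f b)"
    by (simp add: inner_sum_left mult.commute)
  also have "\<dots> = (\<Sum>b\<in>{b\<in>Basis. b \<bullet> x \<noteq> 0}. (b \<bullet> x) * f b)"
    by (rule sum.mono_neutral_right) auto
  finally show ?thesis .
qed

lemma distributed_PiM_normal_inner:
  fixes x :: "'a::euclidean_space"
  assumes "\<sigma> > 0" and "norm x = 1"
  shows "distributed (PiM Basis (\<lambda>_. normal_measure \<sigma>)) lborel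
           (\<lambda>f. (\<Sum>b\<in>Basis. f b *\<^sub>R b) \<bullet> x) (\<lambda>t. ennreal (normal_density 0 \<sigma> t))"
proof -
  let ?M = "PiM (Basis :: 'a set) (\<lambda>_. normal_measure \<sigma>)"
  interpret P: prob_space ?M
    by (intro prob_space_PiM prob_space_normal_measure assms(1))
  \<comment> \<open>Coordinates orthogonal to \<open>x\<close> are dropped: \<open>sum_indep_normal\<close> needs positive variances.\<close>
  define I where "I = {b \<in> (Basis :: 'a set). b \<bullet> x \<noteq> 0}"
  define X where "X b f = (b \<bullet> x) * f b" for b :: 'a and f :: "'a \<Rightarrow> real"
  have "I \<subseteq> Basis" and "finite I"
    by (auto simp: I_def)
  have "I \<noteq> {}"
    unfolding I_def using assms(2) by (intro nonzero_coords_nonempty) auto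
  have "P.indep_vars (\<lambda>_. borel) (\<lambda>b f. (\<lambda>t. (b \<bullet> x) * t) (f b)) I"
    by (rule P.indep_vars_compose2[OF P.indep_vars_subset[OF indep_vars_PiM_components \<open>I \<subseteq> Basis\<close>]])
      (simp_all add: prob_space_normal_measure assms(1))
  then have indep: "P.indep_vars (\<lambda>_. borel) X I"
    by (simp add: X_def[abs_def])
  have distributed_X: "distributed ?M lborel (X b) (\<lambda>t. ennreal (normal_density 0 (\<bar>b \<bullet> x\<bar> * \<sigma>) t))"
    if "b \<in> I" for b
  proof -
    have "b \<in> Basis" "b \<bullet> x \<noteq> 0"
      using that unfolding I_def by blast+
    from P.normal_density_affine[OF distributed_PiM_normal_component[OF assms(1) this(1)] assms(1) this(2), of 0]
    show ?thesis
      by (simp add: X_def[abs_def])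
  qed
  have "distributed ?M lborel (\<lambda>f. \<Sum>b\<in>I. X b f)
      (\<lambda>t. ennreal (normal_density (\<Sum>b\<in>I. 0) (sqrt (\<Sum>b\<in>I. (\<bar>b \<bullet> x\<bar> * \<sigma>)\<^sup>2)) t))"
    by (rule P.sum_indep_normal[OF \<open>finite I\<close> \<open>I \<noteq> {}\<close> indep _ distributed_X])
      (simp add: I_def assms(1))
  moreover have "sqrt (\<Sum>b\<in>I. (\<bar>b \<bullet> x\<bar> * \<sigma>)\<^sup>2) = \<sigma>"
    using sum_nonzero_coords_sq[of x] assms
    by (simp add: I_def power_mult_distrib sum_distrib_right[symmetric])
  ultimately show ?thesis
    by (simp add: inner_sum_Basis_nonzero_coords I_def X_def)
qed

lemma distr_gauss_vec_inner:
  fixes x :: "real^'d"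
  assumes "\<kappa> > 0" and "norm x = 1"
  shows "distr (gauss_vec \<kappa>) lborel (\<lambda>w. w \<bullet> x) = normal_measure \<kappa>"
proof -
  have "distr (gauss_vec \<kappa>) lborel (\<lambda>w. w \<bullet> x)
      = distr (PiM Basis (\<lambda>_. normal_measure \<kappa>)) lborel ((\<lambda>w. w \<bullet> x) \<circ> (\<lambda>f. \<Sum>b\<in>Basis. f b *\<^sub>R b))"
    unfolding gauss_vec_eq_distr_PiM[OF assms(1)]
    by (rule distr_distr[OF _ sum_Basis_scaleR_measurable]) measurable
  also have "\<dots> = normal_measure \<kappa>"
    using distributed_PiM_normal_inner[OF assms]
    by (simp add: distributed_def normal_measure_def comp_def)
  finally show ?thesis .
qed

lemma measure_gauss_vec_inner:
  fixes x :: "real^'d"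
  assumes "\<kappa> > 0" and "norm x = 1" and "S \<in> sets borel"
  shows "measure (gauss_vec \<kappa>) {w. w \<bullet> x \<in> S} = measure (normal_measure \<kappa>) S"
proof -
  have "(\<lambda>w. w \<bullet> x) \<in> measurable (gauss_vec \<kappa>) lborel"
    by measurable
  from measure_distr[OF this, of S] show ?thesis
    using assms by (simp add: distr_gauss_vec_inner vimage_def)
qed

lemma measure_gauss_vec_halfspace_le:
  fixes x :: "real^'d"
  assumes "\<kappa> > 0" and "norm x = 1"
  shows "measure (gauss_vec \<kappa>) {w. w \<bullet> x > 0} \<le> 1 / 2"
  using measure_gauss_vec_inner[OF assms, of "{0<..}"] measure_normal_measure_pos_le[OF assms(1)]
  by simp

lemma measure_gauss_vec_slab_le:
  fixes x :: "real^'d"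
  assumes "\<kappa> > 0" and "norm x = 1" and "R \<ge> 0"
  shows "measure (gauss_vec \<kappa>) {w. \<bar>w \<bullet> x\<bar> \<le> R} \<le> R / \<kappa>"
  using measure_gauss_vec_inner[OF assms(1,2), of "{-R..R}"] measure_normal_measure_Icc_le[OF assms(1,3)]
  by (simp add: abs_le_iff minus_le_iff conj_commute)

section \<open>Concentration of the activation counts\<close>

lemma integral_PiM_component:
  fixes g :: "'b \<Rightarrow> real"
  assumes "prob_space M" and "r \<in> I" and "g \<in> borel_measurable M"
  shows "(\<integral>W. g (W r) \<partial>PiM I (\<lambda>_. M)) = (\<integral>w. g w \<partial>M)"
proof -
  have "(\<integral>W. g (W r) \<partial>PiM I (\<lambda>_. M)) = integral\<^sup>L (distr (PiM I (\<lambda>_. M)) M (\<lambda>W. W r)) g"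
    by (rule integral_distr[symmetric]) (use assms(2,3) in simp_all)
  also have "distr (PiM I (\<lambda>_. M)) M (\<lambda>W. W r) = M"
    using assms(1,2) by (intro distr_PiM_component) simp_all
  finally show ?thesis .
qed

lemma PiM_Hoeffding_upper:
  fixes M :: "'b measure" and g :: "'b \<Rightarrow> real" and m :: nat and \<delta> :: real
  assumes M: "prob_space M" and g_measurable: "g \<in> borel_measurable M"
    and g_range: "\<And>w. g w \<in> {0..1}" and "m > 0" and "0 < \<delta>" and "\<delta> \<le> 1"
  shows "\<exists>H\<in>sets (PiM {..<m} (\<lambda>_. M)). measure (PiM {..<m} (\<lambda>_. M)) H \<ge> 1 - \<delta> \<and>
     (\<forall>W\<in>H. (\<Sum>r<m. g (W r)) \<le> m * (\<integral>w. g w \<partial>M) + sqrt (m * ln (1 / \<delta>) / 2))"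
proof -
  let ?M = "PiM {..<m} (\<lambda>_. M)"
  interpret P: prob_space ?M
    by (intro prob_space_PiM M)
  define X where "X r W = g (W r)" for r and W :: "nat \<Rightarrow> 'b"
  define \<mu> where "\<mu> = (\<Sum>r<m. P.expectation (X r))"
  define \<epsilon> where "\<epsilon> = sqrt (m * ln (1 / \<delta>) / 2)"
  have "P.indep_vars (\<lambda>_. borel) (\<lambda>r W. g (W r)) {..<m}"
    by (rule P.indep_vars_compose2[OF indep_vars_PiM_components[OF M]]) (use \<open>m > 0\<close> g_measurable in auto)
  then interpret H: Hoeffding_ineq ?M "{..<m}" X "\<lambda>_. 0" "\<lambda>_. 1" \<mu>
    using g_range by unfold_locales (simp_all add: X_def[abs_def] \<mu>_def)
  have "\<mu> = m * (\<integral>w. g w \<partial>M)"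
    unfolding \<mu>_def X_def by (simp add: integral_PiM_component[OF M _ g_measurable])
  define H where "H = space ?M - {W\<in>space ?M. (\<Sum>r<m. X r W) \<ge> \<mu> + \<epsilon>}"
  have "P.prob {W\<in>space ?M. (\<Sum>r<m. X r W) \<ge> \<mu> + \<epsilon>} \<le> exp (-2 * \<epsilon>\<^sup>2 / (\<Sum>r<m. (1 - 0)\<^sup>2))"
    by (rule H.Hoeffding_ineq_ge) (use \<open>m > 0\<close> \<open>\<delta> \<le> 1\<close> \<open>0 < \<delta>\<close> in \<open>simp_all add: \<epsilon>_def\<close>)
  also have "\<dots> = exp (- ln (1 / \<delta>))"
  proof -
    have "\<epsilon>\<^sup>2 = m * ln (1 / \<delta>) / 2"
      using \<open>0 < \<delta>\<close> \<open>\<delta> \<le> 1\<close> by (simp add: \<epsilon>_def)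
    then show ?thesis
      using \<open>m > 0\<close> by (simp add: field_simps)
  qed
  also have "\<dots> = \<delta>"
    using \<open>0 < \<delta>\<close> by (simp add: exp_minus)
  finally have "P.prob H \<ge> 1 - \<delta>"
    unfolding H_def by (subst P.prob_compl) simp_all
  moreover have "H \<in> sets ?M"
    unfolding H_def by measurable
  moreover have "(\<Sum>r<m. g (W r)) \<le> m * (\<integral>w. g w \<partial>M) + \<epsilon>" if "W \<in> H" for W
    using that \<open>\<mu> = m * (\<integral>w. g w \<partial>M)\<close> by (auto simp: H_def X_def)
  ultimately show ?thesis
    unfolding \<epsilon>_def by blast
qed

lemma PiM_count_concentration:
  fixes M :: "'b measure" and S :: "nat \<Rightarrow> 'b set" and n m :: nat and p \<delta> :: real
  assumes M: "prob_space M" and S: "\<And>i. i < n \<Longrightarrow> S i \<in> sets M"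
    and bound: "\<And>i. i < n \<Longrightarrow> measure M (S i) \<le> p"
    and "n > 0" and "m > 0" and "0 < \<delta>" and "\<delta> \<le> 1"
  shows "\<exists>H\<in>sets (PiM {..<m} (\<lambda>_. M)). measure (PiM {..<m} (\<lambda>_. M)) H \<ge> 1 - \<delta> \<and>
     (\<forall>W\<in>H. (\<Sum>r<m. \<Sum>i<n. of_bool (W r \<in> S i)) \<le> n * (m * p + sqrt (m * ln (1 / \<delta>) / 2)))"
proof -
  interpret prob_space M
    by (rule M)
  define g where "g w = (1 / real n) * (\<Sum>i<n. indicator (S i) w)" for w
  have "g \<in> borel_measurable M"
    unfolding g_def using S by measurable
  moreover have "g w \<in> {0..1}" for w
  proof -
    have "(\<Sum>i<n. indicator (S i) w) \<le> (\<Sum>i<n. 1 :: real)"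
      by (intro sum_mono) (simp add: indicator_def)
    then show ?thesis
      using \<open>n > 0\<close> by (simp add: g_def sum_nonneg)
  qed
  moreover have "(\<integral>w. g w \<partial>M) \<le> p"
  proof -
    have "(\<integral>w. g w \<partial>M) = (1 / real n) * (\<Sum>i<n. \<integral>w. indicator (S i) w \<partial>M)"
      unfolding g_def using S by (simp add: emeasure_eq_measure)
    also have "\<dots> = (1 / real n) * (\<Sum>i<n. measure M (S i))"
      using S by (simp add: Int_absorb2 sets.sets_into_space)
    also have "\<dots> \<le> (1 / real n) * (\<Sum>i<n. p)"
      using bound by (intro mult_left_mono sum_mono) auto
    finally show ?thesis
      using \<open>n > 0\<close> by simp
  qed
  ultimately obtain H where H: "H \<in> sets (PiM {..<m} (\<lambda>_. M))" "measure (PiM {..<m} (\<lambda>_. M)) H \<ge> 1 - \<delta>"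
    and "\<forall>W\<in>H. (\<Sum>r<m. g (W r)) \<le> m * p + sqrt (m * ln (1 / \<delta>) / 2)"
    using PiM_Hoeffding_upper[OF M _ _ \<open>m > 0\<close> \<open>0 < \<delta>\<close> \<open>\<delta> \<le> 1\<close>, of g] \<open>m > 0\<close>
    by (fastforce intro: order.trans[OF _ add_right_mono[OF mult_left_mono]])
  moreover have "(\<Sum>r<m. \<Sum>i<n. of_bool (W r \<in> S i)) = n * (\<Sum>r<m. g (W r))" for W
    using \<open>n > 0\<close> by (simp add: g_def sum_distrib_left indicator_def)
  ultimately show ?thesis
    using \<open>n > 0\<close> by (fastforce intro: mult_left_mono)
qed

lemma (in prob_space) prob_Int_ge:
  assumes "A \<in> events" and "B \<in> events"
  shows "prob A + prob B - 1 \<le> prob (A \<inter> B)"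
proof -
  have "prob (A \<union> B) = prob A + prob B - prob (A \<inter> B)"
    using assms by (intro measure_Un3) (simp_all add: fmeasurable_eq_sets)
  moreover have "prob (A \<union> B) \<le> 1"
    by (rule prob_le_1)
  ultimately show ?thesis
    by linarith
qed

lemma PiM_gauss_vec_counts:
  fixes x :: "nat \<Rightarrow> real^'d" and n m :: nat and \<kappa> R \<delta> :: real
  assumes "n > 0" and "m > 0" and "\<kappa> > 0" and xn: "\<And>i. i < n \<Longrightarrow> norm (x i) = 1"
    and "R \<ge> 0" and "0 < \<delta>" and "\<delta> \<le> 1"
  shows "\<exists>H\<in>sets (PiM {..<m} (\<lambda>_. gauss_vec \<kappa>)). measure (PiM {..<m} (\<lambda>_. gauss_vec \<kappa>)) H \<ge> 1 - \<delta> \<and>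
     (\<forall>W\<in>H. (\<Sum>r<m. \<Sum>i<n. of_bool (W r \<bullet> x i > 0)) \<le> n * (m * (1 / 2) + sqrt (m * ln (2 / \<delta>) / 2))
        \<and> (\<Sum>r<m. \<Sum>i<n. of_bool (\<bar>W r \<bullet> x i\<bar> \<le> R)) \<le> n * (m * (R / \<kappa>) + sqrt (m * ln (2 / \<delta>) / 2)))"
proof -
  let ?G = "gauss_vec \<kappa> :: (real^'d) measure"
  let ?M = "PiM {..<m} (\<lambda>_. ?G)"
  interpret G: prob_space ?G
    using \<open>\<kappa> > 0\<close> by (rule prob_space_gauss_vec)
  interpret P: prob_space ?M
    by (intro prob_space_PiM G.prob_space_axioms)
  have "0 < \<delta> / 2" "\<delta> / 2 \<le> 1" and L: "ln (1 / (\<delta> / 2)) = ln (2 / \<delta>)"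
    using assms(6,7) by simp_all
  have events: "{w. w \<bullet> x i > 0} \<in> sets ?G" "{w. \<bar>w \<bullet> x i\<bar> \<le> R} \<in> sets ?G" for i
    by measurable
  have half: "measure ?G {w. w \<bullet> x i > 0} \<le> 1 / 2" if "i < n" for i
    using \<open>\<kappa> > 0\<close> xn[OF that] by (rule measure_gauss_vec_halfspace_le)
  have slab: "measure ?G {w. \<bar>w \<bullet> x i\<bar> \<le> R} \<le> R / \<kappa>" if "i < n" for i
    using \<open>\<kappa> > 0\<close> xn[OF that] \<open>R \<ge> 0\<close> by (rule measure_gauss_vec_slab_le)
  note concentration = PiM_count_concentration[OF G.prob_space_axioms _ _ \<open>n > 0\<close> \<open>m > 0\<close> \<open>0 < \<delta> / 2\<close> \<open>\<delta> / 2 \<le> 1\<close>]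
  from concentration[where S = "\<lambda>i. {w. w \<bullet> x i > 0}" and p = "1 / 2", OF events(1) half]
    concentration[where S = "\<lambda>i. {w. \<bar>w \<bullet> x i\<bar> \<le> R}" and p = "R / \<kappa>", OF events(2) slab]
  obtain H1 H2 where H1: "H1 \<in> sets ?M" "measure ?M H1 \<ge> 1 - \<delta> / 2"
    and active: "\<forall>W\<in>H1. (\<Sum>r<m. \<Sum>i<n. of_bool (W r \<bullet> x i > 0)) \<le> n * (m * (1 / 2) + sqrt (m * ln (2 / \<delta>) / 2))"
    and H2: "H2 \<in> sets ?M" "measure ?M H2 \<ge> 1 - \<delta> / 2"
    and boundary: "\<forall>W\<in>H2. (\<Sum>r<m. \<Sum>i<n. of_bool (\<bar>W r \<bullet> x i\<bar> \<le> R)) \<le> n * (m * (R / \<kappa>) + sqrt (m * ln (2 / \<delta>) / 2))"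
    unfolding L mem_Collect_eq by blast
  have "measure ?M (H1 \<inter> H2) \<ge> 1 - \<delta>"
    using P.prob_Int_ge[OF H1(1) H2(1)] H1(2) H2(2) by linarith
  then show ?thesis
    using H1(1) H2(1) active boundary by blast
qed

lemma active_count_term_le:
  fixes n m :: nat and B L S :: real
  assumes "n > 0" and "m > 0" and "B \<ge> 0" and "L \<ge> 0"
    and S: "S \<le> n * (m * (1 / 2) + sqrt (m * L / 2))"
  shows "B / (n * sqrt m) * sqrt S \<le> B / sqrt (2 * real n) * (1 + (2 * L / m) powr (1 / 4))"
proof -
  define t where "t = sqrt (2 * L / m)"
  have "t \<ge> 0"
    using assms by (simp add: t_def)
  have "m * L / 2 = (m / 2)\<^sup>2 * (2 * L / m)"
    using \<open>m > 0\<close> by (simp add: power2_eq_square field_simps)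
  then have "sqrt (m * L / 2) = sqrt ((m / 2)\<^sup>2) * t"
    unfolding t_def by (simp only: real_sqrt_mult)
  then have sqrt_eq: "sqrt (m * L / 2) = m / 2 * t"
    by simp
  have "S \<le> n * (m * (1 / 2) + m / 2 * t)"
    using S unfolding sqrt_eq .
  then have "S \<le> (n * m / 2) * (1 + t)"
    by (simp add: algebra_simps)
  then have "sqrt S \<le> sqrt (n * m / 2) * sqrt (1 + t)"
    using real_sqrt_le_mono by (fastforce simp: real_sqrt_mult[symmetric])
  also have "\<dots> \<le> sqrt (n * m / 2) * (1 + sqrt t)"
    using sqrt_add_le_add_sqrt[of 1 t] \<open>t \<ge> 0\<close> by (intro mult_left_mono) simp_all
  finally have "B / (n * sqrt m) * sqrt S \<le> B / (n * sqrt m) * (sqrt (n * m / 2) * (1 + sqrt t))"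
    using assms by (intro mult_left_mono) simp_all
  also have "\<dots> = B / sqrt (2 * real n) * (1 + sqrt t)"
  proof -
    have "sqrt (n * m / 2) * sqrt (2 * real n) = sqrt (n\<^sup>2 * m)"
      by (simp add: real_sqrt_mult[symmetric] power2_eq_square mult_ac)
    also have "\<dots> = n * sqrt m"
      by (simp add: real_sqrt_mult)
    finally have "sqrt (n * m / 2) * sqrt (2 * real n) = n * sqrt m" .
    then show ?thesis
      using assms by (simp add: field_simps)
  qed
  also have "sqrt t = (2 * L / m) powr (1 / 4)"
    using assms by (simp add: t_def sqrt_def powr_powr root_powr_inverse)
  finally show ?thesis .
qed

lemma boundary_count_term_le:
  fixes n m :: nat and R \<kappa> L S :: real
  assumes "n > 0" and "m > 0" and "R \<ge> 0" and "\<kappa> > 0" and "L \<ge> 0"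
    and S: "S \<le> n * (m * (R / \<kappa>) + sqrt (m * L / 2))"
  shows "2 * R / (n * sqrt m) * S \<le> 2 * R\<^sup>2 * sqrt m / \<kappa> + R * sqrt (2 * L)"
proof -
  define a where "a = sqrt m"
  define h where "h = sqrt (L / 2)"
  have "a > 0"
    using \<open>m > 0\<close> by (simp add: a_def)
  have "real m = a\<^sup>2" and "sqrt (m * L / 2) = a * h"
    by (simp_all add: a_def h_def real_sqrt_mult[symmetric])
  then have "2 * R / (n * sqrt m) * S \<le> 2 * R / (n * a) * (n * (a\<^sup>2 * (R / \<kappa>) + a * h))"
    using S assms \<open>a > 0\<close> unfolding a_def[symmetric] by (intro mult_left_mono) simp_all
  also have "\<dots> = 2 * R\<^sup>2 * a / \<kappa> + R * (2 * h)"
    using \<open>a > 0\<close> \<open>n > 0\<close> \<open>\<kappa> > 0\<close> by (simp add: field_simps power2_eq_square)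
  also have "2 * h = sqrt (2 * L)"
    using real_sqrt_mult[of 4 "L / 2"] by (simp add: h_def)
  finally show ?thesis
    by (simp add: a_def)
qed

lemma rademacher_net_class_le_of_counts:
  fixes x W0 :: "nat \<Rightarrow> real^'d" and a :: "nat \<Rightarrow> real" and n m :: nat and R \<kappa> B L :: real
  assumes "n > 0" and "m > 0" and xn: "\<And>i. i < n \<Longrightarrow> norm (x i) = 1"
    and a: "\<And>r. r < m \<Longrightarrow> \<bar>a r\<bar> \<le> 1" and "R \<ge> 0" and "\<kappa> > 0" and "B \<ge> 0" and "L \<ge> 0"
    and active: "(\<Sum>r<m. \<Sum>i<n. of_bool (W0 r \<bullet> x i > 0)) \<le> n * (m * (1 / 2) + sqrt (m * L / 2))"
    and boundary: "(\<Sum>r<m. \<Sum>i<n. of_bool (\<bar>W0 r \<bullet> x i\<bar> \<le> R)) \<le> n * (m * (R / \<kappa>) + sqrt (m * L / 2))"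
  shows "rademacher n x (net_class m W0 a R B)
     \<le> B / sqrt (2 * real n) * (1 + (2 * L / m) powr (1 / 4)) + 2 * R\<^sup>2 * sqrt m / \<kappa> + R * sqrt (2 * L)"
proof -
  have "rademacher n x (net_class m W0 a R B) \<le>
     B / (n * sqrt m) * sqrt (\<Sum>r<m. \<Sum>i<n. of_bool (W0 r \<bullet> x i > 0))
   + 2 * R / (n * sqrt m) * (\<Sum>r<m. \<Sum>i<n. of_bool (\<bar>W0 r \<bullet> x i\<bar> \<le> R))"
    by (rule rademacher_net_class_le[OF \<open>n > 0\<close> xn a \<open>R \<ge> 0\<close> \<open>B \<ge> 0\<close>])
  then show ?thesis
    using active_count_term_le[OF \<open>n > 0\<close> \<open>m > 0\<close> \<open>B \<ge> 0\<close> \<open>L \<ge> 0\<close> active]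
      boundary_count_term_le[OF \<open>n > 0\<close> \<open>m > 0\<close> \<open>R \<ge> 0\<close> \<open>\<kappa> > 0\<close> \<open>L \<ge> 0\<close> boundary]
    by linarith
qed

lemma init_measure_Times_sign_vectors:
  assumes "\<kappa> > 0" and H: "H \<in> sets (PiM {..<m} (\<lambda>_. gauss_vec \<kappa>))"
  shows "H \<times> sign_vectors m \<in> sets (init_measure m \<kappa>)"
    and "measure (init_measure m \<kappa>) (H \<times> sign_vectors m) = measure (PiM {..<m} (\<lambda>_. gauss_vec \<kappa>)) H"
proof -
  let ?M1 = "PiM {..<m} (\<lambda>_. gauss_vec \<kappa> :: (real^'d) measure)"
  let ?M2 = "PiM {..<m} (\<lambda>_. sign_measure)"
  interpret P1: prob_space ?M1
    by (intro prob_space_PiM prob_space_gauss_vec assms(1))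
  have sign: "prob_space sign_measure"
    unfolding sign_measure_def by (rule prob_space_measure_pmf)
  interpret P2: prob_space ?M2
    by (intro prob_space_PiM sign)
  interpret S: product_sigma_finite "\<lambda>_::nat. sign_measure"
    unfolding product_sigma_finite_def using sign prob_space_imp_sigma_finite by blast
  have signs: "sign_vectors m \<in> sets ?M2"
    by (intro sets_PiM_I_finite) (simp_all add: sign_measure_def)
  show "H \<times> sign_vectors m \<in> sets (init_measure m \<kappa>)"
    unfolding init_measure_def using H signs by (intro pair_measureI) auto
  have "emeasure ?M2 (sign_vectors m) = (\<Prod>i<m. emeasure sign_measure {-1, 1})"
    by (rule S.emeasure_PiM) (simp_all add: sign_measure_def)
  also have "emeasure sign_measure {-1, 1} = 1"
    unfolding sign_measure_def by (simp add: emeasure_pmf_of_set)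
  finally have "emeasure (init_measure m \<kappa>) (H \<times> sign_vectors m) = emeasure ?M1 H"
    unfolding init_measure_def using H signs by (simp add: P2.emeasure_pair_measure_Times)
  then show "measure (init_measure m \<kappa>) (H \<times> sign_vectors m) = measure ?M1 H"
    by (simp add: measure_def)
qed

theorem lemma5p2:
  fixes x :: "nat \<Rightarrow> real^'d" and n m :: nat and \<kappa> R \<delta> :: real
  assumes "n > 0" and "m > 0" and "\<kappa> > 0"
    and "\<And>i. i < n \<Longrightarrow> norm (x i) = 1"
    and "R > 0" and "0 < \<delta>" and "\<delta> < 1"
  shows "\<exists>E \<in> sets (init_measure m \<kappa>).
           measure (init_measure m \<kappa>) E \<ge> 1 - \<delta> \<and>
           (\<forall>(W0, a) \<in> E. \<forall>B > 0.
              rademacher n x (net_class m W0 a R B)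
                \<le> B / sqrt (2 * real n) * (1 + (2 * ln (2 / \<delta>) / real m) powr (1/4))
                  + 2 * R\<^sup>2 * sqrt (real m) / \<kappa> + R * sqrt (2 * ln (2 / \<delta>)))"
proof -
  let ?M = "PiM {..<m} (\<lambda>_. gauss_vec \<kappa> :: (real^'d) measure)" and ?L = "ln (2 / \<delta>)"
  have "R \<ge> 0" and "\<delta> \<le> 1" and "?L \<ge> 0"
    using assms(5-7) by simp_all
  from PiM_gauss_vec_counts[OF assms(1-4) \<open>R \<ge> 0\<close> assms(6) \<open>\<delta> \<le> 1\<close>]
  obtain H where "H \<in> sets ?M" and "measure ?M H \<ge> 1 - \<delta> \<and> (\<forall>W\<in>H.
      (\<Sum>r<m. \<Sum>i<n. of_bool (W r \<bullet> x i > 0)) \<le> n * (m * (1 / 2) + sqrt (m * ?L / 2)) \<and>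
      (\<Sum>r<m. \<Sum>i<n. of_bool (\<bar>W r \<bullet> x i\<bar> \<le> R)) \<le> n * (m * (R / \<kappa>) + sqrt (m * ?L / 2)))" ..
  note H = this(1) conjunct1[OF this(2)] and counts = conjunct2[OF this(2)]
  define E where "E = H \<times> sign_vectors m"
  have "E \<in> sets (init_measure m \<kappa>)" and "measure (init_measure m \<kappa>) E = measure ?M H"
    unfolding E_def using init_measure_Times_sign_vectors[OF \<open>\<kappa> > 0\<close> H(1)] by simp_all
  moreover have "\<forall>(W0, a) \<in> E. \<forall>B > 0. rademacher n x (net_class m W0 a R B)
      \<le> B / sqrt (2 * real n) * (1 + (2 * ?L / real m) powr (1/4)) + 2 * R\<^sup>2 * sqrt (real m) / \<kappa> + R * sqrt (2 * ?L)"
  proof clarify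
    fix W0 a and B :: real assume "(W0, a) \<in> E" and "B > 0"
    then have "W0 \<in> H" and a: "a \<in> sign_vectors m" and "B \<ge> 0"
      by (simp_all add: E_def)
    have "\<bar>a r\<bar> \<le> 1" if "r < m" for r
      using sign_vectors_abs_eq_1[OF a that] by simp
    note counts_W0 = bspec[OF counts \<open>W0 \<in> H\<close>]
    show "rademacher n x (net_class m W0 a R B)
      \<le> B / sqrt (2 * real n) * (1 + (2 * ?L / real m) powr (1/4)) + 2 * R\<^sup>2 * sqrt (real m) / \<kappa> + R * sqrt (2 * ?L)"
      by (rule rademacher_net_class_le_of_counts[OF assms(1,2,4) \<open>\<And>r. r < m \<Longrightarrow> \<bar>a r\<bar> \<le> 1\<close> \<open>R \<ge> 0\<close> assms(3)
          \<open>B \<ge> 0\<close> \<open>?L \<ge> 0\<close> conjunct1[OF counts_W0] conjunct2[OF counts_W0]])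
  qed
  ultimately show ?thesis
    using H(2) by (intro bexI[of _ E] conjI) simp_all
qed

end
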